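(* Let $k\ge1$ and $1\le r\le 4k^2$. Let $\overline{\mathcal{B}}(2k,2k;r)$ be the subset of $\mathcal{B}(2k,2k;r)$ consisting of all boards whose board partition $(\lambda_1,\lambda_2,\lambda_3,\lambda_4)$ satisfies: (i) $\lambda_1\ge\lambda_i$ for all $i>1$; (ii) $\lambda_2\ge\lambda_4$; (iii) if $\lambda_1=\lambda_2$ then $\lambda_3\ge\lambda_4$. Then: (1) $\overline{\mathcal{B}}(2k,2k;r)$ is a disjoint union of sets each consisting of all boards in $\mathcal{B}(2k,2k;r)$ with some fixed board partition; (2) every board of $\mathcal{B}(2k,2k;r)$ is equivalent under $D_4$ to some board of $\overline{\mathcal{B}}(2k,2k;r)$; (3) if two boards of $\overline{\mathcal{B}}(2k,2k;r)$ are equivalent under $D_4$, they have the same board partition.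
   Context: A $2k\times 2k$ grid has cells $(i,j)$, rows $i=1,\dots,2k$ numbered top to bottom and columns $j=1,\dots,2k$ left to right. $\mathcal{B}(2k,2k;r)$ is the set of boards, i.e. subsets of exactly $r$ ("blocked") cells. The dihedral group $D_4$ of symmetries of the square (rotations by $0,90,180,270$ degrees about the center, reflections across the horizontal midline, vertical midline, main diagonal and anti-diagonal) acts on cells and hence on boards; two boards are equivalent under $D_4$ if some element maps one to the other. The grid is divided into four $k\times k$ quadrants: $Q_1$ = rows $1..k$, columns $1..k$ (top-left); $Q_2$ = rows $1..k$, columns $k+1..2k$ (top-right); $Q_3$ = rows $k+1..2k$, columns $k+1..2k$ (bottom-right); $Q_4$ = rows $k+1..2k$, columns $1..k$ (bottom-left). The board partition of a board is $(\lambda_1,\lambda_2,\lambda_3,\lambda_4)$, where $\lambda_i$ is the number of blocked cells in $Q_i$. *)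

theory Defs
  imports Main
begin

type_synonym cell = "nat \<times> nat"

text \<open>Cells (i,j) of the n x n grid, 1-based, rows top to bottom, columns left to right.\<close>
definition grid :: "nat \<Rightarrow> cell set" where
  "grid n = {1..n} \<times> {1..n}"

definition boards :: "nat \<Rightarrow> nat \<Rightarrow> cell set set" where
  "boards n r = {B. B \<subseteq> grid n \<and> card B = r}"

definition D4 :: "nat \<Rightarrow> (cell \<Rightarrow> cell) set" where
  "D4 n = {
     (\<lambda>(i,j). (i, j)),
     (\<lambda>(i,j). (j, n + 1 - i)),
     (\<lambda>(i,j). (n + 1 - i, n + 1 - j)),
     (\<lambda>(i,j). (n + 1 - j, i)),
     (\<lambda>(i,j). (n + 1 - i, j)),
     (\<lambda>(i,j). (i, n + 1 - j)),
     (\<lambda>(i,j). (j, i)),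
     (\<lambda>(i,j). (n + 1 - j, n + 1 - i)) }"

definition D4_equiv :: "nat \<Rightarrow> cell set \<Rightarrow> cell set \<Rightarrow> bool" where
  "D4_equiv n B B' \<longleftrightarrow> (\<exists>g\<in>D4 n. g ` B = B')"

definition Q1 :: "nat \<Rightarrow> cell set" where "Q1 k = {1..k} \<times> {1..k}"
definition Q2 :: "nat \<Rightarrow> cell set" where "Q2 k = {1..k} \<times> {k+1..2*k}"
definition Q3 :: "nat \<Rightarrow> cell set" where "Q3 k = {k+1..2*k} \<times> {k+1..2*k}"
definition Q4 :: "nat \<Rightarrow> cell set" where "Q4 k = {k+1..2*k} \<times> {1..k}"

definition board_partition :: "nat \<Rightarrow> cell set \<Rightarrow> nat \<times> nat \<times> nat \<times> nat" where
  "board_partition k B =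
     (card (B \<inter> Q1 k), card (B \<inter> Q2 k), card (B \<inter> Q3 k), card (B \<inter> Q4 k))"

definition canonical_partition :: "nat \<times> nat \<times> nat \<times> nat \<Rightarrow> bool" where
  "canonical_partition p = (case p of (l1, l2, l3, l4) \<Rightarrow>
      l1 \<ge> l2 \<and> l1 \<ge> l3 \<and> l1 \<ge> l4 \<and> l2 \<ge> l4 \<and> (l1 = l2 \<longrightarrow> l3 \<ge> l4))"

definition boards_bar :: "nat \<Rightarrow> nat \<Rightarrow> cell set set" where
  "boards_bar k r = {B \<in> boards (2*k) r. canonical_partition (board_partition k B)}"

end

theory Submission
  imports Defs
begin

text \<open>Every symmetry of the square maps each quadrant onto a quadrant, so \<open>D4\<close> acts on board
  partitions through its action on the cyclically arranged quadrants \<open>Q1, Q2, Q3, Q4\<close>, and all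
  eight symmetries of that 4-cycle occur. Conditions (i)--(iii) pick out exactly one 4-tuple in
  each orbit of this action: rotate a largest entry to the front, reflect so that the larger of
  its two neighbours comes second, and use the third entry to break a tie between the first two.\<close>

definition dihedral_orbit :: "'a \<times> 'a \<times> 'a \<times> 'a \<Rightarrow> ('a \<times> 'a \<times> 'a \<times> 'a) set" where
  "dihedral_orbit p = (case p of (a, b, c, d) \<Rightarrow>
     {(a, b, c, d), (d, a, b, c), (c, d, a, b), (b, c, d, a),
      (d, c, b, a), (b, a, d, c), (a, d, c, b), (c, b, a, d)})"

lemma dihedral_orbit_rotate: "dihedral_orbit (d, a, b, c) = dihedral_orbit (a, b, c, d)"
  unfolding dihedral_orbit_def by auto

lemma dihedral_orbit_has_canonical_first_max:
  fixes a b c d :: nat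
  assumes "b \<le> a" "c \<le> a" "d \<le> a"
  shows "\<exists>q \<in> dihedral_orbit (a, b, c, d). canonical_partition q"
proof -
  have "canonical_partition (a, b, c, d) \<or> canonical_partition (a, d, c, b) \<or>
        canonical_partition (b, a, d, c) \<or> canonical_partition (d, a, b, c)"
    using assms unfolding canonical_partition_def by auto
  then show ?thesis unfolding dihedral_orbit_def by auto
qed

lemma dihedral_orbit_has_canonical: "\<exists>q \<in> dihedral_orbit p. canonical_partition q"
proof -
  obtain a b c d :: nat where p: "p = (a, b, c, d)" by (cases p) auto
  have "b \<le> a \<and> c \<le> a \<and> d \<le> a \<or> c \<le> b \<and> d \<le> b \<and> a \<le> b \<or>
        d \<le> c \<and> a \<le> c \<and> b \<le> c \<or> a \<le> d \<and> b \<le> d \<and> c \<le> d" by linarith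
  then show ?thesis
    using dihedral_orbit_has_canonical_first_max dihedral_orbit_rotate unfolding p by metis
qed

lemma canonical_unique_in_dihedral_orbit:
  assumes "canonical_partition p" "q \<in> dihedral_orbit p" "canonical_partition q"
  shows "q = p"
proof -
  obtain a b c d :: nat where p: "p = (a, b, c, d)" by (cases p) auto
  show ?thesis
    using assms unfolding p dihedral_orbit_def prod.case
    by (elim insertE emptyE; simp add: canonical_partition_def; linarith)
qed

lemma D4_inj_on_grid: "g \<in> D4 n \<Longrightarrow> inj_on g (grid n)"
  unfolding D4_def by (elim insertE emptyE) (auto simp: inj_on_def grid_def)

lemma D4_image_grid: "g \<in> D4 n \<Longrightarrow> g ` grid n \<subseteq> grid n"
  unfolding D4_def by (elim insertE emptyE) (auto simp: grid_def)

lemma D4_image_boards: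
  assumes "g \<in> D4 n" "B \<in> boards n r"
  shows "g ` B \<in> boards n r"
proof -
  have "B \<subseteq> grid n" "card B = r" using assms(2) by (simp_all add: boards_def)
  moreover have "inj_on g B" using D4_inj_on_grid[OF assms(1)] \<open>B \<subseteq> grid n\<close> by (rule inj_on_subset)
  ultimately show ?thesis using D4_image_grid[OF assms(1)] by (auto simp: boards_def card_image)
qed

lemma card_image_Int:
  assumes "inj_on g A" "B \<subseteq> A" "\<And>x. x \<in> A \<Longrightarrow> g x \<in> Q \<longleftrightarrow> x \<in> P"
  shows "card (g ` B \<inter> Q) = card (B \<inter> P)"
proof -
  have "g ` B \<inter> Q = g ` (B \<inter> P)" using assms(2,3) by blast
  moreover have "inj_on g (B \<inter> P)" using assms(1) by (rule inj_on_subset) (use assms(2) in blast)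
  ultimately show ?thesis by (simp add: card_image)
qed

lemma board_partition_image:
  assumes "inj_on g (grid (2*k))" "B \<subseteq> grid (2*k)"
    and "\<And>x. x \<in> grid (2*k) \<Longrightarrow> g x \<in> Q1 k \<longleftrightarrow> x \<in> P1"
    and "\<And>x. x \<in> grid (2*k) \<Longrightarrow> g x \<in> Q2 k \<longleftrightarrow> x \<in> P2"
    and "\<And>x. x \<in> grid (2*k) \<Longrightarrow> g x \<in> Q3 k \<longleftrightarrow> x \<in> P3"
    and "\<And>x. x \<in> grid (2*k) \<Longrightarrow> g x \<in> Q4 k \<longleftrightarrow> x \<in> P4"
  shows "board_partition k (g ` B) = (card (B \<inter> P1), card (B \<inter> P2), card (B \<inter> P3), card (B \<inter> P4))"
  unfolding board_partition_def
  using card_image_Int[OF assms(1,2,3)] card_image_Int[OF assms(1,2,4)]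
    card_image_Int[OF assms(1,2,5)] card_image_Int[OF assms(1,2,6)]
  by simp

lemma board_partitions_of_D4_images:
  assumes "B \<subseteq> grid (2*k)"
  shows "(\<lambda>g. board_partition k (g ` B)) ` D4 (2*k) = dihedral_orbit (board_partition k B)"
proof -
  let ?p = "\<lambda>P. card (B \<inter> P)"
  have images:
    "board_partition k ((\<lambda>(i, j). (i, j)) ` B) = (?p (Q1 k), ?p (Q2 k), ?p (Q3 k), ?p (Q4 k))"
    "board_partition k ((\<lambda>(i, j). (j, 2*k + 1 - i)) ` B) = (?p (Q4 k), ?p (Q1 k), ?p (Q2 k), ?p (Q3 k))"
    "board_partition k ((\<lambda>(i, j). (2*k + 1 - i, 2*k + 1 - j)) ` B) = (?p (Q3 k), ?p (Q4 k), ?p (Q1 k), ?p (Q2 k))"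
    "board_partition k ((\<lambda>(i, j). (2*k + 1 - j, i)) ` B) = (?p (Q2 k), ?p (Q3 k), ?p (Q4 k), ?p (Q1 k))"
    "board_partition k ((\<lambda>(i, j). (2*k + 1 - i, j)) ` B) = (?p (Q4 k), ?p (Q3 k), ?p (Q2 k), ?p (Q1 k))"
    "board_partition k ((\<lambda>(i, j). (i, 2*k + 1 - j)) ` B) = (?p (Q2 k), ?p (Q1 k), ?p (Q4 k), ?p (Q3 k))"
    "board_partition k ((\<lambda>(i, j). (j, i)) ` B) = (?p (Q1 k), ?p (Q4 k), ?p (Q3 k), ?p (Q2 k))"
    "board_partition k ((\<lambda>(i, j). (2*k + 1 - j, 2*k + 1 - i)) ` B) = (?p (Q3 k), ?p (Q2 k), ?p (Q1 k), ?p (Q4 k))"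
    by (rule board_partition_image[OF _ assms];
        auto simp: inj_on_def grid_def Q1_def Q2_def Q3_def Q4_def)+
  show ?thesis
    by (simp only: D4_def image_insert image_empty images)
      (simp add: dihedral_orbit_def board_partition_def)
qed

lemma ex_D4_equiv_boards_bar:
  assumes B: "B \<in> boards (2*k) r"
  shows "\<exists>B'\<in>boards_bar k r. D4_equiv (2*k) B B'"
proof -
  have "B \<subseteq> grid (2*k)" using B by (simp add: boards_def)
  obtain q where q: "q \<in> dihedral_orbit (board_partition k B)" "canonical_partition q"
    using dihedral_orbit_has_canonical by blast
  have "q \<in> (\<lambda>g. board_partition k (g ` B)) ` D4 (2*k)"
    using q(1) unfolding board_partitions_of_D4_images[OF \<open>B \<subseteq> grid (2*k)\<close>] .
  then obtain g where g: "g \<in> D4 (2*k)" "board_partition k (g ` B) = q" by blast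
  then have "g ` B \<in> boards_bar k r"
    using D4_image_boards[OF g(1) B] q(2) by (simp add: boards_bar_def)
  with g(1) show ?thesis unfolding D4_equiv_def by blast
qed

lemma board_partition_eq_if_D4_equiv:
  assumes B1: "B1 \<in> boards_bar k r" and B2: "B2 \<in> boards_bar k r"
    and "D4_equiv (2*k) B1 B2"
  shows "board_partition k B1 = board_partition k B2"
proof -
  obtain g where "g \<in> D4 (2*k)" "g ` B1 = B2" using \<open>D4_equiv (2*k) B1 B2\<close>
    unfolding D4_equiv_def by blast
  then have "board_partition k B2 \<in> (\<lambda>g. board_partition k (g ` B1)) ` D4 (2*k)" by blast
  moreover have "B1 \<subseteq> grid (2*k)" using B1 by (simp add: boards_bar_def boards_def)
  ultimately have "board_partition k B2 \<in> dihedral_orbit (board_partition k B1)"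
    using board_partitions_of_D4_images by blast
  moreover have "canonical_partition (board_partition k B1)"
    and "canonical_partition (board_partition k B2)"
    using B1 B2 by (simp_all add: boards_bar_def)
  ultimately show ?thesis using canonical_unique_in_dihedral_orbit by metis
qed

theorem theorem4p1:
  fixes k r :: nat
  assumes "k \<ge> 1" and "1 \<le> r" and "r \<le> 4 * k^2"
  shows "(\<exists>P. boards_bar k r =
              (\<Union>p\<in>P. {B \<in> boards (2*k) r. board_partition k B = p})
            \<and> (\<forall>p\<in>P. \<forall>q\<in>P. p \<noteq> q \<longrightarrow>
                 {B \<in> boards (2*k) r. board_partition k B = p} \<inter>
                 {B \<in> boards (2*k) r. board_partition k B = q} = {}))
       \<and> (\<forall>B\<in>boards (2*k) r. \<exists>B'\<in>boards_bar k r. D4_equiv (2*k) B B')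
       \<and> (\<forall>B1\<in>boards_bar k r. \<forall>B2\<in>boards_bar k r.
            D4_equiv (2*k) B1 B2 \<longrightarrow> board_partition k B1 = board_partition k B2)"
proof (intro conjI)
  show "\<exists>P. boards_bar k r =
              (\<Union>p\<in>P. {B \<in> boards (2*k) r. board_partition k B = p})
            \<and> (\<forall>p\<in>P. \<forall>q\<in>P. p \<noteq> q \<longrightarrow>
                 {B \<in> boards (2*k) r. board_partition k B = p} \<inter>
                 {B \<in> boards (2*k) r. board_partition k B = q} = {})"
    by (rule exI[of _ "Collect canonical_partition"]) (auto simp: boards_bar_def)
qed (use ex_D4_equiv_boards_bar board_partition_eq_if_D4_equiv in blast)+

end
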